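(* There exists a Blaschke product $B$ on $\mathbb D$ such that for every $\varepsilon>0$ there is $c_\varepsilon>0$ with $1-|B(z)|\ge c_\varepsilon(1-|z|)^\varepsilon$ for all $z\in\mathbb D$.
   Context: A Blaschke product is $B(z)=\prod_n\frac{|z_n|}{z_n}\frac{z_n-z}{1-\bar z_nz}$ with $z_n\in\mathbb D\setminus\{0\}$, $\sum_n(1-|z_n|)<\infty$. *)

theory Defs
  imports "HOL-Analysis.Analysis"
begin

definition blaschke_factor :: "complex \<Rightarrow> complex \<Rightarrow> complex" where
  "blaschke_factor a z = (complex_of_real (norm a) / a) * ((a - z) / (1 - cnj a * z))"

definition blaschke_seq :: "(nat \<Rightarrow> complex) \<Rightarrow> bool" where
  "blaschke_seq a \<longleftrightarrow> (\<forall>n. a n \<in> ball 0 1 - {0}) \<and> summable (\<lambda>n. 1 - norm (a n))"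

definition blaschke_product :: "(nat \<Rightarrow> complex) \<Rightarrow> complex \<Rightarrow> complex" where
  "blaschke_product a z = (\<Prod>n. blaschke_factor (a n) z)"

end

(* Place 2^k equally spaced zeros on the circle of radius 1 - 2^-k/(k+2)^2, for every k; the Blaschke
   sum is then sum_k 1/(k+2)^2 < oo. A point z with 2^-(k+1) < 1 - |z| \<le> 2^-k lies within 9 * 2^-k of a
   zero a on the k-th circle, hence |1 - cnj(a) z| \<le> 11 * 2^-k, and the elementary estimate
   1 - |b_a(z)| \<ge> (1 - |a|)(1 - |z|) / (2 |1 - cnj(a) z|^2) gives
   1 - |B(z)| \<ge> 1 - |b_a(z)| \<ge> 1/(484 (k+2)^2).
   This lower bound decays only polynomially in k, while (1 - |z|)^\<epsilon> \<le> 2^(-\<epsilon> k) decays exponentially. *)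
theory Submission
  imports Defs "HOL-Real_Asymp.Real_Asymp"
begin

lemma norm_one_minus_cnj_mult_ge:
  fixes a z :: complex
  assumes "norm a \<le> 1"
  shows "1 - norm z \<le> norm (1 - cnj a * z)"
proof -
  have "norm (cnj a * z) \<le> norm z"
    using assms by (simp add: norm_mult mult_left_le_one_le)
  moreover have "1 - norm (cnj a * z) \<le> norm (1 - cnj a * z)"
    by (metis norm_one norm_triangle_ineq2)
  ultimately show ?thesis by linarith
qed

lemma norm_one_minus_cnj_mult_le:
  fixes a z :: complex
  assumes "norm z \<le> 1"
  shows "norm (1 - cnj a * z) \<le> 2 * (1 - norm z) + norm (a - z)"
proof -
  have "cnj z * z = of_real (norm z ^ 2)"
    by (metis complex_norm_square mult.commute of_real_power)
  then have "1 - cnj a * z = of_real (1 - norm z ^ 2) + cnj (z - a) * z"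
    by (simp add: algebra_simps)
  then have "norm (1 - cnj a * z) \<le> \<bar>1 - norm z ^ 2\<bar> + norm (z - a) * norm z"
    by (metis norm_triangle_ineq norm_of_real norm_mult complex_mod_cnj)
  also have "\<dots> \<le> 2 * (1 - norm z) + norm (a - z)"
  proof (rule add_mono)
    have "0 \<le> 1 - norm z ^ 2"
      using assms by (simp add: power_le_one)
    then have "\<bar>1 - norm z ^ 2\<bar> = (1 - norm z) * (1 + norm z)"
      by (simp add: algebra_simps power2_eq_square)
    also have "\<dots> \<le> (1 - norm z) * 2"
      using assms by (intro mult_left_mono) auto
    finally show "\<bar>1 - norm z ^ 2\<bar> \<le> 2 * (1 - norm z)" by simp
    show "norm (z - a) * norm z \<le> norm (a - z)"
      using assms by (simp add: norm_minus_commute mult_left_le)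
  qed
  finally show ?thesis .
qed

lemma norm_blaschke_factor_sq:
  fixes a z :: complex
  assumes "a \<noteq> 0" "norm a < 1" "norm z < 1"
  shows "norm (blaschke_factor a z) ^ 2
           = 1 - (1 - norm a ^ 2) * (1 - norm z ^ 2) / norm (1 - cnj a * z) ^ 2"
proof -
  have norm_factor: "norm (blaschke_factor a z) = norm (a - z) / norm (1 - cnj a * z)"
    using assms by (simp add: blaschke_factor_def norm_mult norm_divide)
  have D: "norm (1 - cnj a * z) > 0"
    using norm_one_minus_cnj_mult_ge[of a z] assms by linarith
  have "norm (a - z) ^ 2 = norm (1 - cnj a * z) ^ 2 - (1 - norm a ^ 2) * (1 - norm z ^ 2)"
    unfolding cmod_power2 by (simp add: power2_eq_square algebra_simps)
  then show ?thesis
    using D unfolding norm_factor by (simp add: power_divide field_simps)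
qed

lemma norm_blaschke_factor_le_1:
  fixes a z :: complex
  assumes "a \<noteq> 0" "norm a < 1" "norm z < 1"
  shows "norm (blaschke_factor a z) \<le> 1"
proof -
  have "(1 - norm a ^ 2) * (1 - norm z ^ 2) / norm (1 - cnj a * z) ^ 2 \<ge> 0"
    using assms by (intro divide_nonneg_nonneg mult_nonneg_nonneg) (auto simp: abs_square_le_1)
  then have "norm (blaschke_factor a z) ^ 2 \<le> 1"
    using norm_blaschke_factor_sq[OF assms] by linarith
  then show ?thesis by (simp add: power_le_one_iff abs_square_le_1)
qed

lemma one_minus_norm_blaschke_factor_ge:
  fixes a z :: complex
  assumes "a \<noteq> 0" "norm a < 1" "norm z < 1"
  shows "(1 - norm a) * (1 - norm z) / (2 * norm (1 - cnj a * z) ^ 2)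
           \<le> 1 - norm (blaschke_factor a z)"
proof -
  define b where "b = norm (blaschke_factor a z)"
  define D where "D = norm (1 - cnj a * z)"
  have "(1 - norm a) * (1 - norm z) \<le> (1 - norm a ^ 2) * (1 - norm z ^ 2)"
    using assms by (intro mult_mono) (auto simp: power2_eq_square mult_left_le_one_le mult_le_one)
  then have "(1 - norm a) * (1 - norm z) / (2 * D ^ 2) \<le> (1 - norm a ^ 2) * (1 - norm z ^ 2) / (2 * D ^ 2)"
    by (rule divide_right_mono) simp
  also have "\<dots> = (1 - b ^ 2) / 2"
    using norm_blaschke_factor_sq[OF assms] by (simp add: b_def D_def)
  also have "\<dots> \<le> 1 - b"
    using zero_le_power2[of "1 - b"] by (simp add: power2_eq_square field_simps)
  finally show ?thesis by (simp add: b_def D_def)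
qed

lemma norm_one_minus_blaschke_factor_le:
  fixes a z :: complex
  assumes "a \<noteq> 0" "norm a < 1" "norm z < 1"
  shows "norm (1 - blaschke_factor a z) \<le> 2 * (1 - norm a) / (1 - norm z)"
proof -
  have D: "1 - norm z \<le> norm (1 - cnj a * z)"
    using norm_one_minus_cnj_mult_ge[of a z] assms by simp
  with assms have "1 - cnj a * z \<noteq> 0" by auto
  then have "1 - blaschke_factor a z
      = (a * (1 - cnj a * z) - of_real (norm a) * (a - z)) / (a * (1 - cnj a * z))"
    using assms unfolding blaschke_factor_def by (simp add: divide_simps)
  also have "a * (1 - cnj a * z) - of_real (norm a) * (a - z)
      = of_real (1 - norm a) * (a + of_real (norm a) * z)"
  proof -
    have "a * cnj a = of_real (norm a) * of_real (norm a)"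
      using complex_norm_square[of a] by (simp add: power2_eq_square)
    then show ?thesis by (simp add: algebra_simps)
  qed
  finally have eq: "1 - blaschke_factor a z
      = of_real (1 - norm a) * (a + of_real (norm a) * z) / (a * (1 - cnj a * z))" .
  have "norm (a + of_real (norm a) * z) \<le> norm a + norm a * norm z"
    using norm_triangle_ineq[of a "of_real (norm a) * z"] by (simp add: norm_mult)
  also have "\<dots> \<le> 2 * norm a"
    using assms by (simp add: mult_left_le_one_le)
  finally have num: "norm (a + of_real (norm a) * z) \<le> 2 * norm a" .
  have "norm (1 - blaschke_factor a z)
      = (1 - norm a) * norm (a + of_real (norm a) * z) / (norm a * norm (1 - cnj a * z))"
    using assms unfolding eq norm_divide norm_mult norm_of_real by simp
  also have "\<dots> \<le> (1 - norm a) * (2 * norm a) / (norm a * (1 - norm z))"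
    using assms num D by (intro frac_le mult_left_mono mult_pos_pos) auto
  also have "\<dots> = 2 * (1 - norm a) / (1 - norm z)"
    using assms by simp
  finally show ?thesis .
qed

lemma convergent_prod_blaschke_factor:
  assumes "blaschke_seq a" "norm z < 1"
  shows "convergent_prod (\<lambda>n. blaschke_factor (a n) z)"
proof (intro abs_convergent_prod_imp_convergent_prod summable_imp_abs_convergent_prod)
  show "summable (\<lambda>n. norm (blaschke_factor (a n) z - 1))"
  proof (rule summable_comparison_test')
    show "summable (\<lambda>n. 2 / (1 - norm z) * (1 - norm (a n)))"
      using assms(1) unfolding blaschke_seq_def by (intro summable_mult) auto
    fix n
    have "norm (blaschke_factor (a n) z - 1) \<le> 2 * (1 - norm (a n)) / (1 - norm z)"
      using norm_one_minus_blaschke_factor_le[of "a n" z] assms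
      by (auto simp: blaschke_seq_def norm_minus_commute)
    then show "norm (norm (blaschke_factor (a n) z - 1)) \<le> 2 / (1 - norm z) * (1 - norm (a n))"
      by simp
  qed
qed

lemma norm_blaschke_product_le_factor:
  assumes a: "blaschke_seq a" and z: "norm z < 1"
  shows "norm (blaschke_product a z) \<le> norm (blaschke_factor (a n) z)"
proof -
  let ?f = "\<lambda>m. blaschke_factor (a m) z"
  have factor_le_1: "norm (?f m) \<le> 1" for m
    using a z by (intro norm_blaschke_factor_le_1) (auto simp: blaschke_seq_def)
  have "(\<lambda>N. norm (\<Prod>m\<le>N. ?f m)) \<longlonglongrightarrow> norm (blaschke_product a z)"
    unfolding blaschke_product_def
    by (intro tendsto_norm convergent_prod_LIMSEQ convergent_prod_blaschke_factor a z)
  moreover have "norm (\<Prod>m\<le>N. ?f m) \<le> norm (?f n)" if "n \<le> N" for N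
  proof -
    have "norm (\<Prod>m\<le>N. ?f m) = norm (?f n) * (\<Prod>m\<in>{..N}-{n}. norm (?f m))"
      using that by (simp add: prod.remove norm_mult flip: prod_norm)
    also have "\<dots> \<le> norm (?f n) * 1"
      by (intro mult_left_mono prod_le_1) (auto intro: factor_le_1)
    finally show ?thesis by simp
  qed
  ultimately show ?thesis
    by (intro LIMSEQ_le_const2) auto
qed

definition ring_gap :: "nat \<Rightarrow> real" where
  "ring_gap k = 1 / (2 ^ k * (real k + 2) ^ 2)"

(* For 2^k \<le> n < 2^(k+1) (so floor_log n = k), dyadic_zeros n is the (n - 2^k)-th of the 2^k-th
   roots of unity, scaled to radius 1 - ring_gap k; dyadic_zeros 0 merely repeats dyadic_zeros 1. *)
definition dyadic_zeros :: "nat \<Rightarrow> complex" where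
  "dyadic_zeros n = of_real (1 - ring_gap (floor_log n))
                      * exp (2 * of_real pi * \<i> * of_nat n / 2 ^ floor_log n)"

lemma ring_gap_pos: "0 < ring_gap k"
  by (simp add: ring_gap_def)

lemma ring_gap_le: "ring_gap k \<le> 1 / 2 ^ k"
proof -
  have "1 \<le> (real k + 2) ^ 2"
    by (rule one_le_power) simp
  then show ?thesis
    unfolding ring_gap_def by (intro divide_left_mono) (simp_all add: mult_le_cancel_left1)
qed

lemma ring_gap_antimono: "m \<le> n \<Longrightarrow> ring_gap n \<le> ring_gap m"
  unfolding ring_gap_def by (intro divide_left_mono mult_mono power_increasing power_mono) auto

lemma ring_gap_less_1: "ring_gap k < 1"
proof -
  have "1 < (real k + 2) ^ 2"
    by (rule one_less_power) simp_all
  also have "\<dots> \<le> 2 ^ k * (real k + 2) ^ 2"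
    by (simp add: mult_le_cancel_right1)
  finally show ?thesis
    by (simp add: ring_gap_def)
qed

lemma norm_dyadic_zeros: "norm (dyadic_zeros n) = 1 - ring_gap (floor_log n)"
  using ring_gap_less_1[of "floor_log n"]
  unfolding dyadic_zeros_def norm_mult norm_of_real by (simp add: norm_divide)

lemma dyadic_zeros_ring:
  assumes "j < 2 ^ k"
  shows "dyadic_zeros (2 ^ k + j)
           = of_real (1 - ring_gap k) * exp (2 * of_real pi * \<i> * of_nat j / 2 ^ k)"
proof -
  have "floor_log (2 ^ k + j) = k"
    using assms by (intro floor_log_eqI) auto
  moreover have "2 * of_real pi * \<i> * of_nat (2 ^ k + j) / (2 ^ k :: complex)
      = 2 * of_real pi * \<i> + 2 * of_real pi * \<i> * of_nat j / 2 ^ k"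
    by (simp add: field_simps)
  ultimately show ?thesis
    by (simp add: dyadic_zeros_def exp_add exp_two_pi_i)
qed

lemma blaschke_seq_dyadic_zeros: "blaschke_seq dyadic_zeros"
  unfolding blaschke_seq_def
proof (intro conjI allI)
  show "dyadic_zeros n \<in> ball 0 1 - {0}" for n
    using norm_dyadic_zeros[of n] ring_gap_pos[of "floor_log n"] ring_gap_less_1[of "floor_log n"]
    by (auto simp: dist_norm)
  have "summable (\<lambda>n. ring_gap (floor_log n))"
  proof (subst condensation_test)
    show "ring_gap (floor_log (Suc n)) \<le> ring_gap (floor_log n)" for n
      by (intro ring_gap_antimono floor_log_le_iff) simp
    show "0 \<le> ring_gap (floor_log n)" for n
      using ring_gap_pos[of "floor_log n"] by simp
    have "summable (\<lambda>n. inverse (real n ^ 2))"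
      by (rule inverse_power_summable) simp
    then have "summable (\<lambda>n. inverse (real (n + 2) ^ 2))"
      by (rule summable_ignore_initial_segment)
    then show "summable (\<lambda>n. 2 ^ n * ring_gap (floor_log (2 ^ n)))"
      by (simp add: ring_gap_def field_simps)
  qed
  then show "summable (\<lambda>n. 1 - norm (dyadic_zeros n))"
    by (simp add: norm_dyadic_zeros)
qed

lemma norm_exp_i_diff_le: "norm (exp (\<i> * of_real x) - exp (\<i> * of_real y)) \<le> \<bar>x - y\<bar>"
proof -
  have "exp (\<i> * of_real x) - exp (\<i> * of_real y) = exp (\<i> * of_real y) * (exp (\<i> * of_real (x - y)) - 1)"
    by (simp add: algebra_simps flip: exp_add)
  then have "norm (exp (\<i> * of_real x) - exp (\<i> * of_real y)) = 2 * \<bar>sin ((x - y) / 2)\<bar>"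
    by (simp only: norm_mult norm_exp_i_times dist_exp_i_1 mult_1)
  also have "\<dots> \<le> \<bar>x - y\<bar>"
    using abs_sin_x_le_abs_x[of "(x - y) / 2"] by simp
  finally show ?thesis .
qed

lemma exists_root_of_unity_near:
  assumes "0 < N" "0 \<le> \<phi>" "\<phi> < 2 * pi"
  shows "\<exists>j<N. norm (exp (2 * of_real pi * \<i> * of_nat j / of_nat N) - exp (\<i> * of_real \<phi>))
                 \<le> 2 * pi / N"
proof -
  define j where "j = nat \<lfloor>N * \<phi> / (2 * pi)\<rfloor>"
  have "0 \<le> N * \<phi> / (2 * pi)"
    using assms by simp
  then have j: "real j \<le> N * \<phi> / (2 * pi)" "N * \<phi> / (2 * pi) < real j + 1"
    unfolding j_def by linarith+
  have "N * \<phi> / (2 * pi) < N"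
    using assms by (simp add: field_simps)
  with j have "j < N" by linarith
  have "2 * pi * j / N \<le> \<phi>" "\<phi> < 2 * pi * j / N + 2 * pi / N"
    using j assms pi_gt_zero by (simp_all add: field_simps)
  then have "\<bar>2 * pi * j / N - \<phi>\<bar> \<le> 2 * pi / N"
    by linarith
  moreover have "exp (2 * of_real pi * \<i> * of_nat j / of_nat N) = exp (\<i> * of_real (2 * pi * j / N))"
    by (simp add: field_simps)
  ultimately show ?thesis
    using \<open>j < N\<close> norm_exp_i_diff_le order_trans by metis
qed

lemma exists_dyadic_scale:
  fixes t :: real
  assumes "0 < t" "t \<le> 1"
  shows "\<exists>k. 1 / 2 ^ (k + 1) < t \<and> t \<le> 1 / 2 ^ k"
proof -
  define k where "k = nat \<lfloor>log 2 (1 / t)\<rfloor>"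
  have "0 \<le> log 2 (1 / t)"
    using assms by simp
  then have "\<lfloor>log 2 (1 / t)\<rfloor> = int k"
    by (simp add: k_def)
  then have "2 powr real k \<le> 1 / t \<and> 1 / t < 2 powr (real k + 1)"
    using floor_log_eq_powr_iff[of "1 / t" 2 "int k"] assms by simp
  moreover have "(2::real) powr real k = 2 ^ k" "(2::real) powr (real k + 1) = 2 ^ (k + 1)"
    using powr_realpow[of 2 k] powr_realpow[of 2 "Suc k"] by (simp_all add: ac_simps)
  ultimately have "2 ^ k \<le> 1 / t" "1 / t < 2 ^ (k + 1)"
    by linarith+
  then show ?thesis
    using assms by (intro exI[of _ k]) (simp add: field_simps)
qed

lemma exists_dyadic_zero_near:
  assumes z: "norm z < 1" and k: "1 - norm z \<le> 1 / 2 ^ k"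
  shows "\<exists>n. norm (dyadic_zeros n) = 1 - ring_gap k \<and> norm (dyadic_zeros n - z) \<le> 9 / 2 ^ k"
proof -
  define u where "u = exp (\<i> * of_real (Arg2pi z))"
  obtain j where "j < 2 ^ k"
    and angle: "norm (exp (2 * of_real pi * \<i> * of_nat j / 2 ^ k) - u) \<le> 2 * pi / 2 ^ k"
    using exists_root_of_unity_near[of "2 ^ k" "Arg2pi z"] Arg2pi_ge_0 Arg2pi_lt_2pi
    unfolding u_def by auto
  define w where "w = exp (2 * of_real pi * \<i> * of_nat j / 2 ^ k)"
  define r where "r = 1 - ring_gap k"
  have a: "dyadic_zeros (2 ^ k + j) = of_real r * w"
    using dyadic_zeros_ring[OF \<open>j < 2 ^ k\<close>] by (simp add: r_def w_def)
  have "norm w = 1"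
    unfolding w_def by (simp add: norm_exp)
  then have "norm (dyadic_zeros (2 ^ k + j)) = 1 - ring_gap k"
    using ring_gap_less_1[of k] unfolding a norm_mult norm_of_real \<open>norm w = 1\<close> r_def by simp
  moreover have "norm (dyadic_zeros (2 ^ k + j) - z) \<le> 9 / 2 ^ k"
  proof -
    define s where "s = norm z"
    have "z = of_real s * u"
      unfolding s_def u_def by (rule Arg2pi_eq)
    then have "dyadic_zeros (2 ^ k + j) - z = of_real (r - norm z) * w + of_real (norm z) * (w - u)"
      unfolding a s_def[symmetric] by (simp add: algebra_simps)
    then have "norm (dyadic_zeros (2 ^ k + j) - z)
        \<le> norm (of_real (r - norm z) * w) + norm (of_real (norm z) * (w - u))"
      by (metis norm_triangle_ineq)
    also have "\<dots> = \<bar>r - norm z\<bar> + norm z * norm (w - u)"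
      by (simp only: norm_mult norm_of_real \<open>norm w = 1\<close> mult_1_right abs_norm_cancel)
    also have "\<dots> \<le> 1 / 2 ^ k + 1 * (2 * pi / 2 ^ k)"
    proof (rule add_mono)
      show "\<bar>r - norm z\<bar> \<le> 1 / 2 ^ k"
        using ring_gap_pos[of k] ring_gap_le[of k] k z unfolding r_def by linarith
      show "norm z * norm (w - u) \<le> 1 * (2 * pi / 2 ^ k)"
        using angle z unfolding w_def by (intro mult_mono) auto
    qed
    also have "\<dots> \<le> 9 / 2 ^ k"
      using pi_less_4 by (simp add: field_simps)
    finally show ?thesis .
  qed
  ultimately show ?thesis by blast
qed

lemma one_minus_norm_blaschke_product_dyadic_zeros_ge:
  assumes z: "norm z < 1" and k: "1 / 2 ^ (k + 1) < 1 - norm z" "1 - norm z \<le> 1 / 2 ^ k"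
  shows "1 / (484 * (real k + 2) ^ 2) \<le> 1 - norm (blaschke_product dyadic_zeros z)"
proof -
  obtain n where na: "norm (dyadic_zeros n) = 1 - ring_gap k"
    and close: "norm (dyadic_zeros n - z) \<le> 9 / 2 ^ k"
    using exists_dyadic_zero_near[OF z k(2)] by blast
  define a where "a = dyadic_zeros n"
  have a: "a \<noteq> 0" "norm a < 1"
    using blaschke_seq_dyadic_zeros unfolding blaschke_seq_def a_def by auto
  define D where "D = norm (1 - cnj a * z)"
  have "0 < D"
    using norm_one_minus_cnj_mult_ge[of a z] a z unfolding D_def by linarith
  have "D \<le> 2 * (1 - norm z) + norm (a - z)"
    using norm_one_minus_cnj_mult_le[of z a] z by (simp add: D_def)
  also have "\<dots> \<le> 11 / 2 ^ k"
    using k(2) close by (simp add: a_def field_simps)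
  finally have "D \<le> 11 / 2 ^ k" .
  have frac: "1 / (484 * Q) = 1 / (P * Q) * (1 / (P * 2)) / (2 * (11 / P) ^ 2)"
    if "0 < P" "0 < Q" for P Q :: real
    using that by (simp add: field_simps power2_eq_square)
  have "1 / (484 * (real k + 2) ^ 2) = ring_gap k * (1 / 2 ^ (k + 1)) / (2 * (11 / 2 ^ k) ^ 2)"
    unfolding ring_gap_def power_add power_one_right by (rule frac) simp_all
  also have "\<dots> \<le> (1 - norm a) * (1 - norm z) / (2 * D ^ 2)"
    using na k(1) \<open>0 < D\<close> \<open>D \<le> 11 / 2 ^ k\<close> ring_gap_pos[of k]
    by (intro frac_le mult_mono mult_pos_pos mult_left_mono power_mono) (auto simp: a_def)
  also have "\<dots> \<le> 1 - norm (blaschke_factor a z)"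
    using one_minus_norm_blaschke_factor_ge[OF a z] by (simp add: D_def)
  also have "\<dots> \<le> 1 - norm (blaschke_product dyadic_zeros z)"
    using norm_blaschke_product_le_factor[OF blaschke_seq_dyadic_zeros z, of n] by (simp add: a_def)
  finally show ?thesis .
qed

lemma powr_dyadic_le_inverse_square:
  fixes e :: real
  assumes "0 < e"
  shows "\<exists>c>0. \<forall>k t. 0 \<le> t \<longrightarrow> t \<le> 1 / 2 ^ k \<longrightarrow> c * t powr e \<le> 1 / (real k + 2) ^ 2"
proof -
  have decay: "(\<lambda>k. (real k + 2) ^ 2 * 2 powr (- e * real k)) \<longlonglongrightarrow> 0"
    using assms by real_asymp
  obtain M where "0 < M" and M: "\<And>k. norm ((real k + 2) ^ 2 * 2 powr (- e * real k)) \<le> M"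
    using convergent_imp_Bseq[OF convergentI[OF decay]] by (auto elim: BseqE)
  have "1 / M * t powr e \<le> 1 / (real k + 2) ^ 2" if "0 \<le> t" "t \<le> 1 / 2 ^ k" for k t
  proof -
    have "t powr e \<le> (1 / 2 ^ k) powr e"
      using that assms by (intro powr_mono2) auto
    also have "\<dots> = (2 powr (- real k)) powr e"
      by (simp add: powr_minus_divide powr_realpow)
    also have "\<dots> = 2 powr (- e * real k)"
      by (simp add: powr_powr mult.commute)
    also have "\<dots> \<le> M / (real k + 2) ^ 2"
      using M[of k] by (simp add: field_simps)
    finally show ?thesis
      using \<open>0 < M\<close> by (simp add: field_simps)
  qed
  then show ?thesis
    using \<open>0 < M\<close> by (intro exI[of _ "1 / M"]) auto
qed

theorem mainTheorem18:
  shows "\<exists>a. blaschke_seq a \<and>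
           (\<forall>\<epsilon>::real. \<epsilon> > 0 \<longrightarrow> (\<exists>c::real. c > 0 \<and>
              (\<forall>z\<in>ball (0::complex) 1.
                 1 - norm (blaschke_product a z) \<ge> c * (1 - norm z) powr \<epsilon>)))"
proof (intro exI[of _ dyadic_zeros] conjI allI impI)
  show "blaschke_seq dyadic_zeros"
    by (rule blaschke_seq_dyadic_zeros)
  fix e :: real
  assume "0 < e"
  then obtain c where "0 < c"
    and c: "\<And>k t. 0 \<le> t \<Longrightarrow> t \<le> 1 / 2 ^ k \<Longrightarrow> c * t powr e \<le> 1 / (real k + 2) ^ 2"
    using powr_dyadic_le_inverse_square by blast
  have "c / 484 * (1 - norm z) powr e \<le> 1 - norm (blaschke_product dyadic_zeros z)"
    if "norm z < 1" for z
  proof -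
    have "0 < 1 - norm z" "1 - norm z \<le> 1"
      using that by auto
    then obtain k where k: "1 / 2 ^ (k + 1) < 1 - norm z" "1 - norm z \<le> 1 / 2 ^ k"
      using exists_dyadic_scale by blast
    have "c / 484 * (1 - norm z) powr e \<le> 1 / (484 * (real k + 2) ^ 2)"
      using c[OF _ k(2)] that by simp
    also have "\<dots> \<le> 1 - norm (blaschke_product dyadic_zeros z)"
      by (rule one_minus_norm_blaschke_product_dyadic_zeros_ge[OF that k])
    finally show ?thesis .
  qed
  with \<open>0 < c\<close> show "\<exists>c>0. \<forall>z\<in>ball 0 1. c * (1 - norm z) powr e \<le> 1 - norm (blaschke_product dyadic_zeros z)"
    by (intro exI[of _ "c / 484"]) auto
qed

end
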